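(* Let $G$ be a layered, structurally saturated sequent. Then the relation $\le$ on the layers of $G$ is a (partial) order relation, i.e. reflexive, transitive and antisymmetric.
   Context: A sequent $G$ is $\mathcal{R},\Gamma\Rightarrow\Delta$ where $\mathcal{R}$ is a set of relational atoms $xRy$ or $x\le y$ between labels and $\Gamma,\Delta$ are multisets of labelled formulas $x{:}A$. Write $x\le_G y$, $xR_Gy$ if the corresponding atom is in $\mathcal{R}$; $x{:}C^\bullet$ means $x{:}C\in\Gamma$. $G$ is structurally saturated if: $x\le_G y$ and $x{:}C^\bullet$ imply $y{:}C^\bullet$; $xR_Gy$ and $y\le_G z$ imply some $u$ with $x\le_G u$ and $uR_Gz$; $xR_Gy$ and $x\le_G z$ imply some $u$ with $y\le_G u$ and $zR_Gu$; $\le_G$ and $R_G$ are both transitive and reflexive on all labels of $G$. A layer of $G$ is an equivalence class of the reflexive-transitive closure $\sim_G$ of $R_G\cup R_G^{-1}$. $G$ is layered if for all labels $x,x',y,y'$: (1) if $x\sim_G y$... precisely: if $x \mathrel{(R_G\cup R_G^{-1})^*} y$ with $x\ne y$ then neither $x\le_G y$ nor $y\le_G x$; (2) if $x \mathrel{(R_G\cup R_G^{-1})^*} y$, $x' \mathrel{(R_G\cup R_G^{-1})^*} y'$, $x\le_G x'$ and $x\ne x'$, then not $y'\le_G y$. For layers $L_1,L_2$, $L_1\le L_2$ iff there are $x\in L_1$, $y\in L_2$ with $x\le_G y$. *)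

theory Defs
  imports Main "HOL-Library.Multiset"
begin

datatype 'l rel_atom = RelR 'l 'l | RelLe 'l 'l

datatype ('l, 'f) sequent =
  Seq "'l rel_atom set" "('l \<times> 'f) multiset" "('l \<times> 'f) multiset"

fun rels :: "('l, 'f) sequent \<Rightarrow> 'l rel_atom set" where
  "rels (Seq R \<Gamma> \<Delta>) = R"
fun ante :: "('l, 'f) sequent \<Rightarrow> ('l \<times> 'f) multiset" where
  "ante (Seq R \<Gamma> \<Delta>) = \<Gamma>"
fun succ :: "('l, 'f) sequent \<Rightarrow> ('l \<times> 'f) multiset" where
  "succ (Seq R \<Gamma> \<Delta>) = \<Delta>"

definition leG :: "('l, 'f) sequent \<Rightarrow> 'l \<Rightarrow> 'l \<Rightarrow> bool" where
  "leG G x y \<longleftrightarrow> RelLe x y \<in> rels G"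

definition RG :: "('l, 'f) sequent \<Rightarrow> 'l \<Rightarrow> 'l \<Rightarrow> bool" where
  "RG G x y \<longleftrightarrow> RelR x y \<in> rels G"

fun atom_labels :: "'l rel_atom \<Rightarrow> 'l set" where
  "atom_labels (RelR x y) = {x, y}"
| "atom_labels (RelLe x y) = {x, y}"

definition labels :: "('l, 'f) sequent \<Rightarrow> 'l set" where
  "labels G = (\<Union>a\<in>rels G. atom_labels a) \<union> fst ` set_mset (ante G) \<union> fst ` set_mset (succ G)"

definition struct_saturated :: "('l, 'f) sequent \<Rightarrow> bool" where
  "struct_saturated G \<longleftrightarrow>
     (\<forall>x y C. leG G x y \<and> (x, C) \<in># ante G \<longrightarrow> (y, C) \<in># ante G) \<and>
     (\<forall>x y z. RG G x y \<and> leG G y z \<longrightarrow> (\<exists>u. leG G x u \<and> RG G u z)) \<and>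
     (\<forall>x y z. RG G x y \<and> leG G x z \<longrightarrow> (\<exists>u. leG G y u \<and> RG G z u)) \<and>
     (\<forall>x y z. leG G x y \<and> leG G y z \<longrightarrow> leG G x z) \<and>
     (\<forall>x y z. RG G x y \<and> RG G y z \<longrightarrow> RG G x z) \<and>
     (\<forall>x\<in>labels G. leG G x x \<and> RG G x x)"

definition simG :: "('l, 'f) sequent \<Rightarrow> ('l \<times> 'l) set" where
  "simG G = ({(x, y). RG G x y} \<union> {(x, y). RG G x y}\<inverse>)\<^sup>*"

definition layered :: "('l, 'f) sequent \<Rightarrow> bool" where
  "layered G \<longleftrightarrow>
     (\<forall>x y. (x, y) \<in> simG G \<and> x \<noteq> y \<longrightarrow> \<not> leG G x y \<and> \<not> leG G y x) \<and>
     (\<forall>x x' y y'. (x, y) \<in> simG G \<and> (x', y') \<in> simG G \<and> leG G x x' \<and> x \<noteq> x'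
        \<longrightarrow> \<not> leG G y' y)"

definition layers :: "('l, 'f) sequent \<Rightarrow> 'l set set" where
  "layers G = labels G // (simG G \<inter> (labels G \<times> labels G))"

definition layer_le :: "('l, 'f) sequent \<Rightarrow> 'l set \<Rightarrow> 'l set \<Rightarrow> bool" where
  "layer_le G L1 L2 \<longleftrightarrow> (\<exists>x\<in>L1. \<exists>y\<in>L2. leG G x y)"

end

theory Submission
  imports Defs
begin

text \<open>Structural saturation lets a \<open>\<le>\<close>-edge be transported along any \<open>R\<close>-path, in either
direction of \<open>R\<close>, so a \<open>\<le>\<close>-edge from one label of a layer can be reproduced from every label
of that layer, landing in the same target layer. Transitivity of layer comparison follows by
composing with the transitivity of \<open>\<le>\<close>. For antisymmetry, \<open>x \<le> y\<close> with \<open>x\<close> in \<open>L\<^sub>1\<close>, \<open>y\<close> in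
\<open>L\<^sub>2\<close>, together with an edge from \<open>L\<^sub>2\<close> back to \<open>L\<^sub>1\<close>, yields \<open>y \<le> z\<close> with \<open>z \<sim> x\<close>; the
second layering condition then forces \<open>x = y\<close>, i.e. \<open>L\<^sub>1 = L\<^sub>2\<close>.\<close>

lemma leG_labels: "leG G x y \<Longrightarrow> x \<in> labels G \<and> y \<in> labels G"
  unfolding leG_def labels_def by force

lemma struct_saturated_leG_refl: "struct_saturated G \<Longrightarrow> x \<in> labels G \<Longrightarrow> leG G x x"
  unfolding struct_saturated_def by blast

lemma struct_saturated_leG_trans:
  "struct_saturated G \<Longrightarrow> leG G x y \<Longrightarrow> leG G y z \<Longrightarrow> leG G x z"
  unfolding struct_saturated_def by blast

lemma struct_saturated_RG_leG:
  "struct_saturated G \<Longrightarrow> RG G x y \<Longrightarrow> leG G y z \<Longrightarrow> \<exists>u. leG G x u \<and> RG G u z"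
  unfolding struct_saturated_def by blast

lemma struct_saturated_leG_RG:
  "struct_saturated G \<Longrightarrow> RG G x y \<Longrightarrow> leG G x z \<Longrightarrow> \<exists>u. leG G y u \<and> RG G z u"
  unfolding struct_saturated_def by blast

lemma layered_leG_back_eq:
  assumes "layered G" and "leG G x x'" and "(x, y) \<in> simG G" and "(x', y') \<in> simG G"
    and "leG G y' y"
  shows "x = x'"
  using assms unfolding layered_def by blast

lemma sym_simG: "sym (simG G)"
  unfolding simG_def by (rule sym_rtrancl) (auto simp: sym_def)

lemma RG_imp_simG:
  assumes "RG G x y"
  shows "(x, y) \<in> simG G" and "(y, x) \<in> simG G"
  using assms unfolding simG_def by blast+

lemma equiv_simG_labels: "equiv (labels G) (simG G \<inter> labels G \<times> labels G)"
proof (rule equivI)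
  show "refl_on (labels G) (simG G \<inter> labels G \<times> labels G)"
    unfolding simG_def by (auto intro: refl_onI)
  show "sym (simG G \<inter> labels G \<times> labels G)"
    using sym_simG[of G] by (auto simp: sym_def)
  show "trans (simG G \<inter> labels G \<times> labels G)"
    unfolding simG_def by (auto intro!: transI)
qed auto

lemma layer_simG:
  assumes "L \<in> layers G" and "x \<in> L" and "y \<in> L"
  shows "(x, y) \<in> simG G"
proof -
  have "(x, y) \<in> simG G \<inter> labels G \<times> labels G"
    using assms by (intro in_quotient_imp_in_rel[OF equiv_simG_labels]) (auto simp: layers_def)
  then show ?thesis by simp
qed

lemma layer_subset_labels: "L \<in> layers G \<Longrightarrow> L \<subseteq> labels G"
  unfolding layers_def by (rule in_quotient_imp_subset[OF equiv_simG_labels])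

lemma layer_closed_simG:
  assumes "L \<in> layers G" and "x \<in> L" and "(x, y) \<in> simG G" and "y \<in> labels G"
  shows "y \<in> L"
proof -
  have "x \<in> labels G"
    using layer_subset_labels assms(1,2) by blast
  with assms(3,4) have "(x, y) \<in> simG G \<inter> labels G \<times> labels G"
    by simp
  then show ?thesis
    by (rule in_quotient_imp_closed[OF equiv_simG_labels assms(1)[unfolded layers_def] assms(2)])
qed

lemma layers_eqI:
  assumes "L \<in> layers G" and "L' \<in> layers G" and "x \<in> L" and "x \<in> L'"
  shows "L = L'"
proof -
  have "x \<in> labels G"
    using layer_subset_labels assms(1,3) by blast
  with assms show ?thesis
    unfolding layers_def by (subst quotient_eq_iff[OF equiv_simG_labels]) (auto simp: simG_def)
qed

lemma leG_transport_simG: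
  assumes sat: "struct_saturated G"
    and "(a, a') \<in> simG G" and "leG G a b"
  shows "\<exists>b'. (b, b') \<in> simG G \<and> leG G a' b'"
  using assms(2)[unfolded simG_def]
proof (induction rule: rtrancl_induct)
  case base
  then show ?case using assms(3) unfolding simG_def by blast
next
  case (step y z)
  then obtain c where bc: "(b, c) \<in> simG G" and yc: "leG G y c" by blast
  from step.hyps(2) consider "RG G y z" | "RG G z y" by blast
  then obtain u where "leG G z u" and "(c, u) \<in> simG G"
  proof cases
    case 1
    then obtain u where "leG G z u" "RG G c u"
      using struct_saturated_leG_RG[OF sat _ yc] by blast
    then show ?thesis using that[of u] RG_imp_simG(1)[of G c u] by blast
  next
    case 2
    then obtain u where "leG G z u" "RG G u c"
      using struct_saturated_RG_leG[OF sat _ yc] by blast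
    then show ?thesis using that[of u] RG_imp_simG(2)[of G u c] by blast
  qed
  then show ?case using bc unfolding simG_def by (meson rtrancl_trans)
qed

lemma layer_le_refl:
  assumes "struct_saturated G" and "L \<in> layers G"
  shows "layer_le G L L"
proof -
  obtain x where "x \<in> L"
    using in_quotient_imp_non_empty[OF equiv_simG_labels] assms(2) unfolding layers_def by blast
  moreover have "x \<in> labels G"
    using layer_subset_labels[OF assms(2)] \<open>x \<in> L\<close> by blast
  ultimately show ?thesis
    using struct_saturated_leG_refl[OF assms(1)] unfolding layer_le_def by blast
qed

lemma layer_le_trans:
  assumes sat: "struct_saturated G"
    and L2: "L2 \<in> layers G" and L3: "L3 \<in> layers G"
    and "layer_le G L1 L2" and "layer_le G L2 L3"
  shows "layer_le G L1 L3"
proof -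
  obtain x1 y2 where "x1 \<in> L1" "y2 \<in> L2" and x1y2: "leG G x1 y2"
    using assms(4) unfolding layer_le_def by blast
  obtain x2 y3 where "x2 \<in> L2" "y3 \<in> L3" and x2y3: "leG G x2 y3"
    using assms(5) unfolding layer_le_def by blast
  obtain z where "(y3, z) \<in> simG G" and y2z: "leG G y2 z"
    using leG_transport_simG[OF sat layer_simG[OF L2 \<open>x2 \<in> L2\<close> \<open>y2 \<in> L2\<close>] x2y3] by blast
  then have "z \<in> L3"
    using layer_closed_simG[OF L3 \<open>y3 \<in> L3\<close>] leG_labels[OF y2z] by blast
  moreover have "leG G x1 z"
    using struct_saturated_leG_trans[OF sat x1y2 y2z] .
  ultimately show ?thesis
    using \<open>x1 \<in> L1\<close> unfolding layer_le_def by blast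
qed

lemma layer_le_antisym:
  assumes "layered G" and sat: "struct_saturated G"
    and L1: "L1 \<in> layers G" and L2: "L2 \<in> layers G"
    and "layer_le G L1 L2" and "layer_le G L2 L1"
  shows "L1 = L2"
proof -
  obtain x1 y2 where "x1 \<in> L1" "y2 \<in> L2" and x1y2: "leG G x1 y2"
    using assms(5) unfolding layer_le_def by blast
  obtain x2 y1 where "x2 \<in> L2" "y1 \<in> L1" and x2y1: "leG G x2 y1"
    using assms(6) unfolding layer_le_def by blast
  obtain z where y1z: "(y1, z) \<in> simG G" and y2z: "leG G y2 z"
    using leG_transport_simG[OF sat layer_simG[OF L2 \<open>x2 \<in> L2\<close> \<open>y2 \<in> L2\<close>] x2y1] by blast
  have "(x1, z) \<in> simG G"
    using layer_simG[OF L1 \<open>x1 \<in> L1\<close> \<open>y1 \<in> L1\<close>] y1z unfolding simG_def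
    by (rule rtrancl_trans)
  moreover have "(y2, y2) \<in> simG G"
    unfolding simG_def by (rule rtrancl_refl)
  ultimately have "x1 = y2"
    using layered_leG_back_eq[OF \<open>layered G\<close> x1y2 _ _ y2z] by blast
  then show ?thesis
    using layers_eqI[OF L1 L2] \<open>x1 \<in> L1\<close> \<open>y2 \<in> L2\<close> by blast
qed

theorem mainTheorem4:
  fixes G :: "('l, 'f) sequent"
  assumes "layered G" and "struct_saturated G"
  shows "(\<forall>L\<in>layers G. layer_le G L L)
       \<and> (\<forall>L1\<in>layers G. \<forall>L2\<in>layers G. \<forall>L3\<in>layers G.
            layer_le G L1 L2 \<and> layer_le G L2 L3 \<longrightarrow> layer_le G L1 L3)
       \<and> (\<forall>L1\<in>layers G. \<forall>L2\<in>layers G.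
            layer_le G L1 L2 \<and> layer_le G L2 L1 \<longrightarrow> L1 = L2)"
  using layer_le_refl[OF assms(2)] layer_le_trans[OF assms(2)]
    layer_le_antisym[OF assms] by blast

end
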